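(* Let $\alpha>0$, $t_0>0$, $x_0,v_0\in\mathcal H$, and let $x:[t_0,+\infty)\to\mathcal H$ be a solution of the Cauchy problem $$\tfrac{\alpha}{t}\dot x(t)+\operatorname{proj}_{C(x(t))+\ddot x(t)}(0)=0\ (t>t_0),\qquad x(t_0)=x_0,\ \dot x(t_0)=v_0 .$$ For $i=1,\dots,m$ define $\mathcal W_i(t)=f_i(x(t))+\frac12\|\dot x(t)\|^2$. Then for all $i$ and almost all $t\in[t_0,+\infty)$, $$\tfrac{d}{dt}\mathcal W_i(t)\le-\tfrac{\alpha}{t}\|\dot x(t)\|^2 .$$ Hence each $\mathcal W_i$ is nonincreasing, and $\mathcal W_i^\infty=\lim_{t\to+\infty}\mathcal W_i(t)$ exists in $\mathbb R\cup\{-\infty\}$. If $f_i$ is bounded from below, then $\mathcal W_i^\infty\in\mathbb R$.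
   Context: $\mathcal H$ is a real Hilbert space. $f_1,\dots,f_m:\mathcal H\to\mathbb R$ are convex and continuously differentiable. $C(x)=\operatorname{co}\{\nabla f_i(x):i=1,\dots,m\}$. For a closed convex $K$, $\operatorname{proj}_K(y)=\arg\min_{w\in K}\|w-y\|^2$. A solution of the Cauchy problem is a function $x:[t_0,+\infty)\to\mathcal H$ such that: $x\in C^1([t_0,+\infty))$; $\dot x$ is absolutely continuous on $[t_0,T]$ for every $T\ge t_0$; there is a Bochner measurable $\ddot x$ with $\dot x(t)=\dot x(t_0)+\int_{t_0}^t\ddot x(s)\,ds$ for all $t$, and $\frac{d}{dt}\dot x=\ddot x$ a.e.; the equation holds for almost all $t\ge t_0$; and the initial conditions hold. *)

theory Defs
  imports "HOL-Analysis.Analysis"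
begin

definition proj :: "'a::real_inner set \<Rightarrow> 'a \<Rightarrow> 'a" where
  "proj K y = (SOME w. w \<in> K \<and> (\<forall>z\<in>K. (norm (w - y))\<^sup>2 \<le> (norm (z - y))\<^sup>2))"

definition abs_cont_on :: "real set \<Rightarrow> (real \<Rightarrow> 'a::real_normed_vector) \<Rightarrow> bool" where
  "abs_cont_on S f \<longleftrightarrow>
     (\<forall>\<epsilon>>0. \<exists>\<delta>>0. \<forall>(n::nat) (a::nat \<Rightarrow> real) b.
        (\<forall>k<n. a k \<le> b k \<and> {a k..b k} \<subseteq> S) \<longrightarrow>
        (\<forall>j<n. \<forall>k<n. j \<noteq> k \<longrightarrow> b j \<le> a k \<or> b k \<le> a j) \<longrightarrow>
        (\<Sum>k<n. b k - a k) < \<delta> \<longrightarrow>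
        (\<Sum>k<n. norm (f (b k) - f (a k))) < \<epsilon>)"

definition Cset :: "nat \<Rightarrow> (nat \<Rightarrow> 'a \<Rightarrow> 'a::real_inner) \<Rightarrow> 'a \<Rightarrow> 'a set" where
  "Cset m g z = convex hull {g i z | i. i \<in> {1..m}}"

end

theory Submission
  imports Defs
begin

(* Along the trajectory the energy W_i = f_i(x) + |x'|^2/2 has derivative <grad f_i(x) + x'', x'>
   almost everywhere. The vector grad f_i(x) + x'' lies in the convex compact set C(x) + x'', whose
   element of minimal norm is -(alpha/t) x' by the equation, so the variational inequality of the
   projection gives W_i' <= -(alpha/t) |x'|^2. On compact intervals W_i is absolutely continuous
   (f_i o x is C^1, and x' is absolutely continuous and bounded), and an absolutely continuous
   function with almost everywhere nonpositive derivative is nonincreasing; this is proved with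
   Cousin's lemma, the exceptional null set being covered by cells of small total length. *)

definition nonoverlapping_in :: "real set \<Rightarrow> nat \<Rightarrow> (nat \<Rightarrow> real) \<Rightarrow> (nat \<Rightarrow> real) \<Rightarrow> bool" where
  "nonoverlapping_in S n a b \<longleftrightarrow>
     (\<forall>k<n. a k \<le> b k \<and> {a k..b k} \<subseteq> S) \<and> (\<forall>j<n. \<forall>k<n. j \<noteq> k \<longrightarrow> b j \<le> a k \<or> b k \<le> a j)"

lemma nonoverlapping_in_mono: "nonoverlapping_in T n a b \<Longrightarrow> T \<subseteq> S \<Longrightarrow> nonoverlapping_in S n a b"
  unfolding nonoverlapping_in_def by blast

lemma nonoverlapping_inD:
  assumes "nonoverlapping_in S n a b" "k < n"
  shows "a k \<le> b k" "a k \<in> S" "b k \<in> S"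
proof -
  from assms have "a k \<le> b k" "{a k..b k} \<subseteq> S"
    unfolding nonoverlapping_in_def by auto
  then show "a k \<le> b k" "a k \<in> S" "b k \<in> S" by auto
qed

lemma abs_cont_on_iff:
  "abs_cont_on S f \<longleftrightarrow> (\<forall>\<epsilon>>0. \<exists>\<delta>>0. \<forall>n a b. nonoverlapping_in S n a b \<longrightarrow>
     (\<Sum>k<n. b k - a k) < \<delta> \<longrightarrow> (\<Sum>k<n. norm (f (b k) - f (a k))) < \<epsilon>)"
  unfolding abs_cont_on_def nonoverlapping_in_def by (simp only: imp_conjL)

lemma abs_cont_onI:
  assumes "\<And>\<epsilon>. \<epsilon> > 0 \<Longrightarrow> \<exists>\<delta>>0. \<forall>n a b. nonoverlapping_in S n a b \<longrightarrow>
     (\<Sum>k<n. b k - a k) < \<delta> \<longrightarrow> (\<Sum>k<n. norm (f (b k) - f (a k))) < \<epsilon>"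
  shows "abs_cont_on S f"
  unfolding abs_cont_on_iff using assms by blast

lemma abs_cont_onE:
  assumes "abs_cont_on S f" "\<epsilon> > 0"
  obtains \<delta> where "\<delta> > 0" "\<And>n a b. nonoverlapping_in S n a b \<Longrightarrow>
    (\<Sum>k<n. b k - a k) < \<delta> \<Longrightarrow> (\<Sum>k<n. norm (f (b k) - f (a k))) < \<epsilon>"
proof -
  obtain \<delta> where "\<delta> > 0" and \<delta>: "\<forall>n a b. nonoverlapping_in S n a b \<longrightarrow>
      (\<Sum>k<n. b k - a k) < \<delta> \<longrightarrow> (\<Sum>k<n. norm (f (b k) - f (a k))) < \<epsilon>"
    using assms unfolding abs_cont_on_iff by blast
  show thesis
    by (rule that[OF \<open>\<delta> > 0\<close>]) (use \<delta> in blast)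
qed

lemma abs_cont_on_subset:
  assumes "abs_cont_on S f" "T \<subseteq> S"
  shows "abs_cont_on T f"
proof (rule abs_cont_onI)
  fix \<epsilon> :: real assume "\<epsilon> > 0"
  then obtain \<delta> where "\<delta> > 0" and \<delta>: "\<And>n a b. nonoverlapping_in S n a b \<Longrightarrow>
      (\<Sum>k<n. b k - a k) < \<delta> \<Longrightarrow> (\<Sum>k<n. norm (f (b k) - f (a k))) < \<epsilon>"
    using abs_cont_onE[OF assms(1)] by blast
  then show "\<exists>\<delta>>0. \<forall>n a b. nonoverlapping_in T n a b \<longrightarrow>
      (\<Sum>k<n. b k - a k) < \<delta> \<longrightarrow> (\<Sum>k<n. norm (f (b k) - f (a k))) < \<epsilon>"
    using nonoverlapping_in_mono[OF _ assms(2)] by blast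
qed

lemma abs_cont_on_id: "abs_cont_on S (\<lambda>t. t)"
proof (rule abs_cont_onI)
  fix \<epsilon> :: real assume "\<epsilon> > 0"
  have "(\<Sum>k<n. norm (b k - a k)) = (\<Sum>k<n. b k - a k)" if "nonoverlapping_in S n a b" for n a b
    using nonoverlapping_inD[OF that] by (intro sum.cong) auto
  with \<open>\<epsilon> > 0\<close> show "\<exists>\<delta>>0. \<forall>n a b. nonoverlapping_in S n a b \<longrightarrow>
      (\<Sum>k<n. b k - a k) < \<delta> \<longrightarrow> (\<Sum>k<n. norm (b k - a k)) < \<epsilon>"
    by (intro exI[of _ \<epsilon>]) auto
qed

lemma abs_cont_on_compose_lipschitz:
  fixes h :: "real \<Rightarrow> 'a::real_normed_vector" and q :: "real \<Rightarrow> 'b::real_normed_vector"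
  assumes h: "abs_cont_on S h"
    and lip: "\<And>u v. u \<in> S \<Longrightarrow> v \<in> S \<Longrightarrow> norm (q v - q u) \<le> M * norm (h v - h u)"
  shows "abs_cont_on S q"
proof (rule abs_cont_onI)
  fix \<epsilon> :: real assume "\<epsilon> > 0"
  define c where "c = \<bar>M\<bar> + 1"
  have c: "c > 0" "M \<le> c" by (auto simp: c_def)
  with \<open>\<epsilon> > 0\<close> have "\<epsilon> / c > 0" by simp
  then obtain \<delta> where "\<delta> > 0" and \<delta>: "\<And>n a b. nonoverlapping_in S n a b \<Longrightarrow>
      (\<Sum>k<n. b k - a k) < \<delta> \<Longrightarrow> (\<Sum>k<n. norm (h (b k) - h (a k))) < \<epsilon> / c"
    using abs_cont_onE[OF h] by blast
  have "(\<Sum>k<n. norm (q (b k) - q (a k))) < \<epsilon>"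
    if ab: "nonoverlapping_in S n a b" and len: "(\<Sum>k<n. b k - a k) < \<delta>" for n a b
  proof -
    have "(\<Sum>k<n. norm (q (b k) - q (a k))) \<le> (\<Sum>k<n. c * norm (h (b k) - h (a k)))"
    proof (rule sum_mono)
      fix k assume "k \<in> {..<n}"
      then have "a k \<in> S" "b k \<in> S"
        using nonoverlapping_inD[OF ab] by auto
      then show "norm (q (b k) - q (a k)) \<le> c * norm (h (b k) - h (a k))"
        using lip c(2) by (meson mult_right_mono norm_ge_zero order_trans)
    qed
    also have "\<dots> < c * (\<epsilon> / c)"
      unfolding sum_distrib_left[symmetric] using \<delta>[OF ab len] c(1) by (rule mult_strict_left_mono)
    finally show ?thesis using c(1) by simp
  qed
  with \<open>\<delta> > 0\<close> show "\<exists>\<delta>>0. \<forall>n a b. nonoverlapping_in S n a b \<longrightarrow>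
      (\<Sum>k<n. b k - a k) < \<delta> \<longrightarrow> (\<Sum>k<n. norm (q (b k) - q (a k))) < \<epsilon>"
    by blast
qed

lemma abs_cont_on_add:
  fixes f g :: "real \<Rightarrow> 'a::real_normed_vector"
  assumes f: "abs_cont_on S f" and g: "abs_cont_on S g"
  shows "abs_cont_on S (\<lambda>t. f t + g t)"
proof (rule abs_cont_onI)
  fix \<epsilon> :: real assume "\<epsilon> > 0"
  then have "\<epsilon> / 2 > 0" by simp
  obtain \<delta>1 where "\<delta>1 > 0" and \<delta>1: "\<And>n a b. nonoverlapping_in S n a b \<Longrightarrow>
      (\<Sum>k<n. b k - a k) < \<delta>1 \<Longrightarrow> (\<Sum>k<n. norm (f (b k) - f (a k))) < \<epsilon> / 2"
    using abs_cont_onE[OF f \<open>\<epsilon> / 2 > 0\<close>] by blast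
  obtain \<delta>2 where "\<delta>2 > 0" and \<delta>2: "\<And>n a b. nonoverlapping_in S n a b \<Longrightarrow>
      (\<Sum>k<n. b k - a k) < \<delta>2 \<Longrightarrow> (\<Sum>k<n. norm (g (b k) - g (a k))) < \<epsilon> / 2"
    using abs_cont_onE[OF g \<open>\<epsilon> / 2 > 0\<close>] by blast
  have "(\<Sum>k<n. norm (f (b k) + g (b k) - (f (a k) + g (a k)))) < \<epsilon>"
    if ab: "nonoverlapping_in S n a b" and len: "(\<Sum>k<n. b k - a k) < min \<delta>1 \<delta>2" for n a b
  proof -
    have "(\<Sum>k<n. norm (f (b k) + g (b k) - (f (a k) + g (a k))))
        \<le> (\<Sum>k<n. norm (f (b k) - f (a k))) + (\<Sum>k<n. norm (g (b k) - g (a k)))"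
      unfolding sum.distrib[symmetric] by (intro sum_mono) (simp only: add_diff_add norm_triangle_ineq)
    also have "\<dots> < \<epsilon> / 2 + \<epsilon> / 2"
      using \<delta>1[OF ab] \<delta>2[OF ab] len by (intro add_strict_mono) auto
    finally show ?thesis by simp
  qed
  with \<open>\<delta>1 > 0\<close> \<open>\<delta>2 > 0\<close> show "\<exists>\<delta>>0. \<forall>n a b. nonoverlapping_in S n a b \<longrightarrow>
      (\<Sum>k<n. b k - a k) < \<delta> \<longrightarrow> (\<Sum>k<n. norm (f (b k) + g (b k) - (f (a k) + g (a k)))) < \<epsilon>"
    by (intro exI[of _ "min \<delta>1 \<delta>2"]) auto
qed

lemma tagged_partial_division_real_cellE:
  fixes p :: "(real \<times> real set) set"
  assumes "p tagged_partial_division_of S" "(t, K) \<in> p"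
  obtains u v where "K = {u..v}" "u \<le> t" "t \<le> v" "{u..v} \<subseteq> S"
proof -
  obtain u v where "K = cbox u v"
    using tagged_partial_division_ofD(4)[OF assms] by blast
  then show thesis
    using that tagged_partial_division_ofD(2,3)[OF assms] by auto
qed

lemma disjoint_interior_Icc_imp_le:
  fixes a b c d :: real
  assumes "a < b" "c < d" "interior {a..b} \<inter> interior {c..d} = {}"
  shows "b \<le> c \<or> d \<le> a"
proof (rule ccontr)
  assume "\<not> (b \<le> c \<or> d \<le> a)"
  then have "(max a c + min b d) / 2 \<in> interior {a..b} \<inter> interior {c..d}"
    using assms(1,2) by auto
  with assms(3) show False by blast
qed

lemma nondegenerate_tagged_partial_division_nonoverlapping:
  fixes q :: "(real \<times> real set) set"
  assumes q: "q tagged_partial_division_of S" and nondeg: "\<And>t K. (t, K) \<in> q \<Longrightarrow> Inf K < Sup K"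
  obtains n a b where "nonoverlapping_in S n a b"
    "\<And>\<phi> :: real set \<Rightarrow> real. (\<Sum>(t,K)\<in>q. \<phi> K) = (\<Sum>k<n. \<phi> {a k..b k})"
proof -
  have "finite q" using q by (rule tagged_partial_division_ofD(1))
  then obtain e where e: "bij_betw e {..<card q} q"
    using ex_bij_betw_nat_finite lessThan_atLeast0 by metis
  define n where "n = card q"
  define a where "a k = Inf (snd (e k))" for k
  define b where "b k = Sup (snd (e k))" for k
  have ek: "e k \<in> q" if "k < n" for k
    using e that by (auto simp: bij_betw_def n_def)
  have cell: "snd (e k) = {a k..b k} \<and> a k < b k \<and> {a k..b k} \<subseteq> S" if k: "k < n" for k
  proof -
    obtain t K where tK: "e k = (t, K)" "(t, K) \<in> q"
      using ek[OF k] by (cases "e k") auto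
    moreover have "Inf K < Sup K"
      using tK(2) by (rule nondeg)
    ultimately show ?thesis
      by (elim tagged_partial_division_real_cellE[OF q]) (auto simp: a_def b_def)
  qed
  have "b j \<le> a k \<or> b k \<le> a j" if "j < n" "k < n" "j \<noteq> k" for j k
  proof -
    have "e j \<noteq> e k" "e j \<in> q" "e k \<in> q"
      using e that ek by (auto simp: bij_betw_def inj_on_def n_def)
    then have "interior (snd (e j)) \<inter> interior (snd (e k)) = {}"
      using tagged_partial_division_ofD(5)[OF q, of "fst (e j)" "snd (e j)" "fst (e k)" "snd (e k)"]
      by simp
    then show ?thesis
      using disjoint_interior_Icc_imp_le cell that by metis
  qed
  with cell have "nonoverlapping_in S n a b"
    unfolding nonoverlapping_in_def by (auto simp: less_imp_le)
  moreover have "(\<Sum>(t,K)\<in>q. \<phi> K) = (\<Sum>k<n. \<phi> {a k..b k})" for \<phi> :: "real set \<Rightarrow> real"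
    using sum.reindex_bij_betw[OF e, of "\<lambda>(t,K). \<phi> K"] cell by (simp add: n_def case_prod_beta)
  ultimately show thesis by (rule that)
qed

lemma tagged_partial_division_nonoverlapping:
  fixes p :: "(real \<times> real set) set"
  assumes p: "p tagged_partial_division_of S"
  obtains n a b where "nonoverlapping_in S n a b"
    "\<And>\<phi> :: real set \<Rightarrow> real. (\<And>u. \<phi> {u..u} = 0) \<Longrightarrow> (\<Sum>(t,K)\<in>p. \<phi> K) = (\<Sum>k<n. \<phi> {a k..b k})"
proof -
  (* Degenerate cells must be dropped: a point cell inside another cell violates the ordering
     condition of nonoverlapping_in. *)
  define q where "q = {(t,K) \<in> p. Inf K < Sup K}"
  have "finite p" "q \<subseteq> p"
    using p by (auto simp: q_def dest: tagged_partial_division_ofD(1))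
  then have "q tagged_partial_division_of S"
    using p by (blast intro: tagged_partial_division_subset)
  then obtain n a b where ab: "nonoverlapping_in S n a b"
    and sums: "\<And>\<phi> :: real set \<Rightarrow> real. (\<Sum>(t,K)\<in>q. \<phi> K) = (\<Sum>k<n. \<phi> {a k..b k})"
    by (rule nondegenerate_tagged_partial_division_nonoverlapping) (auto simp: q_def)
  show thesis
  proof (rule that[OF ab])
    fix \<phi> :: "real set \<Rightarrow> real" assume \<phi>: "\<And>u. \<phi> {u..u} = 0"
    have "\<phi> K = 0" if tK: "(t, K) \<in> p - q" for t K
    proof -
      from tK have "(t, K) \<in> p" by blast
      then obtain u v where "K = {u..v}" "u \<le> v"
        by (rule tagged_partial_division_real_cellE[OF p]) auto
      with tK \<phi> show ?thesis by (auto simp: q_def)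
    qed
    then have "(\<Sum>(t,K)\<in>p. \<phi> K) = (\<Sum>(t,K)\<in>q. \<phi> K)"
      using \<open>finite p\<close> \<open>q \<subseteq> p\<close> by (intro sum.mono_neutral_right) auto
    with sums show "(\<Sum>(t,K)\<in>p. \<phi> K) = (\<Sum>k<n. \<phi> {a k..b k})"
      by simp
  qed
qed

lemma abs_cont_on_tagged_partial_division:
  fixes f :: "real \<Rightarrow> 'a::real_normed_vector"
  assumes "abs_cont_on S f" "\<epsilon> > 0"
  obtains \<delta> where "\<delta> > 0"
    "\<And>p. p tagged_partial_division_of S \<Longrightarrow> (\<Sum>(t,K)\<in>p. measure lebesgue K) < \<delta> \<Longrightarrow>
      (\<Sum>(t,K)\<in>p. norm (f (Sup K) - f (Inf K))) < \<epsilon>"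
proof -
  obtain \<delta> where "\<delta> > 0" and \<delta>: "\<And>n a b. nonoverlapping_in S n a b \<Longrightarrow>
      (\<Sum>k<n. b k - a k) < \<delta> \<Longrightarrow> (\<Sum>k<n. norm (f (b k) - f (a k))) < \<epsilon>"
    using abs_cont_onE[OF assms] by blast
  have "(\<Sum>(t,K)\<in>p. norm (f (Sup K) - f (Inf K))) < \<epsilon>"
    if p: "p tagged_partial_division_of S" and len: "(\<Sum>(t,K)\<in>p. measure lebesgue K) < \<delta>" for p
  proof -
    obtain n a b where ab: "nonoverlapping_in S n a b"
      and sums: "\<And>\<phi> :: real set \<Rightarrow> real. (\<And>u. \<phi> {u..u} = 0) \<Longrightarrow> (\<Sum>(t,K)\<in>p. \<phi> K) = (\<Sum>k<n. \<phi> {a k..b k})"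
      using tagged_partial_division_nonoverlapping[OF p] by blast
    have "(\<Sum>(t,K)\<in>p. measure lebesgue K) = (\<Sum>k<n. b k - a k)"
      using sums[of "\<lambda>K. measure lebesgue K"] nonoverlapping_inD(1)[OF ab] by simp
    moreover have "(\<Sum>(t,K)\<in>p. norm (f (Sup K) - f (Inf K))) = (\<Sum>k<n. norm (f (b k) - f (a k)))"
      using sums[of "\<lambda>K. norm (f (Sup K) - f (Inf K))"] nonoverlapping_inD(1)[OF ab] by simp
    ultimately show ?thesis
      using \<delta>[OF ab] len by simp
  qed
  with \<open>\<delta> > 0\<close> show thesis using that by blast
qed

lemma sum_measure_tagged_partial_division_le:
  fixes p :: "(real \<times> real set) set"
  assumes p: "p tagged_partial_division_of S" and U: "\<Union>(snd ` p) \<subseteq> U" "U \<in> lmeasurable"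
  shows "(\<Sum>(t,K)\<in>p. measure lebesgue K) \<le> measure lebesgue U"
proof -
  note p' = tagged_partial_division_of_Union_self[OF p]
  have div: "snd ` p division_of \<Union>(snd ` p)"
    using division_of_tagged_division[OF p'] .
  have "(\<Sum>(t,K)\<in>p. measure lebesgue K) = (\<Sum>K\<in>snd ` p. measure lebesgue K)"
    by (rule sum.over_tagged_division_lemma[OF p']) simp
  also have "\<dots> = measure lebesgue (\<Union>(snd ` p))"
    using content_division[OF div] .
  also have "\<dots> \<le> measure lebesgue U"
    using lmeasurable_division[OF div] U by (intro measure_mono_fmeasurable) auto
  finally show ?thesis .
qed

lemma negligible_outer_open:
  fixes S :: "'a::euclidean_space set"
  assumes "negligible S" "e > 0"
  obtains U where "open U" "S \<subseteq> U" "U \<in> lmeasurable" "measure lebesgue U < e"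
proof -
  have S: "S \<in> null_sets lebesgue" "S \<in> lmeasurable"
    using assms(1) negligible_iff_null_sets negligible_imp_measurable by blast+
  then obtain U where U: "open U" "S \<subseteq> U" "U - S \<in> lmeasurable" "emeasure lebesgue (U - S) < ennreal e"
    using sets_lebesgue_outer_open assms(2) by blast
  have eq: "U = (U - S) \<union> S" using U(2) by blast
  have "U \<in> lmeasurable"
    by (subst eq) (intro fmeasurable.Un U(3) S(2))
  moreover have "measure lebesgue U = measure lebesgue (U - S)"
    by (subst eq) (intro measure_Un_null_set fmeasurableD U(3) S(1))
  moreover have "measure lebesgue (U - S) < e"
    using U(3,4) assms(2) by (simp add: emeasure_eq_measure2 ennreal_less_iff)
  ultimately show thesis using that U(1,2) by auto
qed

lemma nonpos_derivative_local_increment_le: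
  fixes f :: "real \<Rightarrow> real"
  assumes "(f has_real_derivative D) (at t within S)" "D \<le> 0" "\<epsilon> > 0"
  obtains r where "r > 0"
    "\<And>u v. u \<in> S \<Longrightarrow> v \<in> S \<Longrightarrow> t \<in> {u..v} \<Longrightarrow> {u..v} \<subseteq> ball t r \<Longrightarrow> f v - f u \<le> \<epsilon> * (v - u)"
proof -
  obtain r where "r > 0" and r: "\<And>y. y \<in> S \<Longrightarrow> \<bar>y - t\<bar> < r \<Longrightarrow>
      \<bar>f y - f t - D * (y - t)\<bar> \<le> \<epsilon> * \<bar>y - t\<bar>"
    using assms(1,3) unfolding has_field_derivative_def has_derivative_within_alt real_norm_def by blast
  have "f v - f u \<le> \<epsilon> * (v - u)"
    if uv: "u \<in> S" "v \<in> S" "t \<in> {u..v}" "{u..v} \<subseteq> ball t r" for u v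
  proof -
    have "u \<in> {u..v}" "v \<in> {u..v}"
      using uv(3) by auto
    then have "u \<in> ball t r" "v \<in> ball t r"
      using uv(4) by blast+
    then have "\<bar>u - t\<bar> < r" "\<bar>v - t\<bar> < r"
      by (auto simp: dist_real_def abs_minus_commute)
    then have "\<bar>f v - f t - D * (v - t)\<bar> \<le> \<epsilon> * \<bar>v - t\<bar>" "\<bar>f u - f t - D * (u - t)\<bar> \<le> \<epsilon> * \<bar>u - t\<bar>"
      using r uv(1,2) by blast+
    moreover have "\<bar>v - t\<bar> = v - t" "\<bar>u - t\<bar> = t - u"
      using uv(3) by auto
    moreover have "D * (v - t) \<le> 0" "D * (u - t) \<ge> 0"
      using uv(3) assms(2) by (auto simp: mult_nonpos_nonneg mult_nonpos_nonpos)
    ultimately show ?thesis by (simp add: abs_le_iff algebra_simps)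
  qed
  with \<open>r > 0\<close> show thesis using that by blast
qed

lemma gauge_nonpos_derivative:
  fixes f :: "real \<Rightarrow> real"
  assumes "open U" "N \<subseteq> U" "\<epsilon> > 0"
    and der: "\<And>t. t \<in> S - N \<Longrightarrow> \<exists>D. (f has_real_derivative D) (at t within S) \<and> D \<le> 0"
  obtains \<gamma> where "gauge \<gamma>" "\<And>t. t \<in> N \<Longrightarrow> \<gamma> t \<subseteq> U"
    "\<And>t u v. t \<in> S - N \<Longrightarrow> u \<in> S \<Longrightarrow> v \<in> S \<Longrightarrow> t \<in> {u..v} \<Longrightarrow> {u..v} \<subseteq> \<gamma> t \<Longrightarrow>
      f v - f u \<le> \<epsilon> * (v - u)"
proof -
  have "\<exists>r>0. (t \<in> N \<longrightarrow> ball t r \<subseteq> U) \<and> (t \<in> S - N \<longrightarrow> (\<forall>u v. u \<in> S \<longrightarrow> v \<in> S \<longrightarrow>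
      t \<in> {u..v} \<longrightarrow> {u..v} \<subseteq> ball t r \<longrightarrow> f v - f u \<le> \<epsilon> * (v - u)))" for t
  proof (cases "t \<in> S - N")
    case True
    then obtain D where "(f has_real_derivative D) (at t within S)" "D \<le> 0"
      using der by blast
    then obtain r where "r > 0" "\<And>u v. u \<in> S \<Longrightarrow> v \<in> S \<Longrightarrow> t \<in> {u..v} \<Longrightarrow>
        {u..v} \<subseteq> ball t r \<Longrightarrow> f v - f u \<le> \<epsilon> * (v - u)"
      using nonpos_derivative_local_increment_le \<open>\<epsilon> > 0\<close> by metis
    with True show ?thesis by blast
  next
    case False
    show ?thesis
    proof (cases "t \<in> N")
      case True
      with assms(1,2) obtain r where "r > 0" "ball t r \<subseteq> U"
        using open_contains_ball by blast
      with False show ?thesis by blast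
    qed (use False in \<open>auto intro: exI[of _ 1]\<close>)
  qed
  then obtain R where R: "\<And>t. R t > 0 \<and> (t \<in> N \<longrightarrow> ball t (R t) \<subseteq> U) \<and> (t \<in> S - N \<longrightarrow>
      (\<forall>u v. u \<in> S \<longrightarrow> v \<in> S \<longrightarrow> t \<in> {u..v} \<longrightarrow> {u..v} \<subseteq> ball t (R t) \<longrightarrow> f v - f u \<le> \<epsilon> * (v - u)))"
    by metis
  have "gauge (\<lambda>t. ball t (R t))"
    using R by (intro gauge_ball_dependent) blast
  then show thesis
    using that[of "\<lambda>t. ball t (R t)"] R by blast
qed

lemma tagged_division_sum_increments_le:
  fixes f :: "real \<Rightarrow> real"
  assumes p: "p tagged_division_of {a..b}" and "a \<le> b" "\<epsilon> \<ge> 0" "q \<subseteq> p"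
    and incr: "\<And>t K. (t, K) \<in> q \<Longrightarrow> f (Sup K) - f (Inf K) \<le> \<epsilon> * (Sup K - Inf K)"
  shows "(\<Sum>(t,K)\<in>q. f (Sup K) - f (Inf K)) \<le> \<epsilon> * (b - a)"
proof -
  have "finite p" using p by blast
  have "(\<Sum>(t,K)\<in>q. f (Sup K) - f (Inf K)) \<le> (\<Sum>(t,K)\<in>q. \<epsilon> * (Sup K - Inf K))"
  proof (rule sum_mono)
    fix z assume "z \<in> q"
    then show "(case z of (t, K) \<Rightarrow> f (Sup K) - f (Inf K)) \<le> (case z of (t, K) \<Rightarrow> \<epsilon> * (Sup K - Inf K))"
      using incr by (cases z) auto
  qed
  also have "\<dots> \<le> (\<Sum>(t,K)\<in>p. \<epsilon> * (Sup K - Inf K))"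
  proof (rule sum_mono2[OF \<open>finite p\<close> \<open>q \<subseteq> p\<close>])
    fix z assume "z \<in> p - q"
    then obtain t K where z: "z = (t, K)" "(t, K) \<in> p"
      by (cases z) auto
    moreover have "p tagged_partial_division_of {a..b}"
      using p unfolding tagged_division_of_def by blast
    ultimately obtain u v where "K = {u..v}" "u \<le> v"
      by (elim tagged_partial_division_real_cellE) auto
    then show "0 \<le> (case z of (t, K) \<Rightarrow> \<epsilon> * (Sup K - Inf K))"
      using z \<open>\<epsilon> \<ge> 0\<close> by simp
  qed
  also have "\<dots> = \<epsilon> * (b - a)"
    using additive_tagged_division_1[OF \<open>a \<le> b\<close> p, of id]
    by (simp add: sum_distrib_left[symmetric] case_prod_beta)
  finally show ?thesis .
qed

lemma abs_cont_on_increments_near_negligible: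
  fixes f :: "real \<Rightarrow> real"
  assumes "abs_cont_on {a..b} f" "negligible N" "\<epsilon> > 0"
  obtains U where "open U" "N \<subseteq> U"
    "\<And>p. p tagged_partial_division_of {a..b} \<Longrightarrow> \<Union>(snd ` p) \<subseteq> U \<Longrightarrow>
      (\<Sum>(t,K)\<in>p. f (Sup K) - f (Inf K)) < \<epsilon>"
proof -
  obtain \<delta> where "\<delta> > 0" and \<delta>: "\<And>p. p tagged_partial_division_of {a..b} \<Longrightarrow>
      (\<Sum>(t,K)\<in>p. measure lebesgue K) < \<delta> \<Longrightarrow> (\<Sum>(t,K)\<in>p. norm (f (Sup K) - f (Inf K))) < \<epsilon>"
    using abs_cont_on_tagged_partial_division[OF assms(1,3)] by blast
  obtain U where U: "open U" "N \<subseteq> U" "U \<in> lmeasurable" "measure lebesgue U < \<delta>"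
    using negligible_outer_open[OF assms(2) \<open>\<delta> > 0\<close>] by blast
  have "(\<Sum>(t,K)\<in>p. f (Sup K) - f (Inf K)) < \<epsilon>"
    if p: "p tagged_partial_division_of {a..b}" and "\<Union>(snd ` p) \<subseteq> U" for p
  proof -
    have "(\<Sum>(t,K)\<in>p. measure lebesgue K) < \<delta>"
      using sum_measure_tagged_partial_division_le[OF p \<open>\<Union>(snd ` p) \<subseteq> U\<close> U(3)] U(4) by linarith
    then have "(\<Sum>(t,K)\<in>p. norm (f (Sup K) - f (Inf K))) < \<epsilon>"
      by (rule \<delta>[OF p])
    moreover have "(\<Sum>(t,K)\<in>p. f (Sup K) - f (Inf K)) \<le> (\<Sum>(t,K)\<in>p. norm (f (Sup K) - f (Inf K)))"
      by (intro sum_mono) auto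
    ultimately show ?thesis by linarith
  qed
  with U(1,2) show thesis using that by blast
qed

lemma abs_cont_on_nonpos_derivative_increment_le:
  fixes f :: "real \<Rightarrow> real"
  assumes "a \<le> b" "abs_cont_on {a..b} f" "negligible N" "\<epsilon> > 0"
    and der: "\<And>t. t \<in> {a..b} - N \<Longrightarrow> \<exists>D. (f has_real_derivative D) (at t within {a..b}) \<and> D \<le> 0"
  shows "f b - f a \<le> \<epsilon> * (b - a + 1)"
proof -
  (* In a gamma-fine division, cells tagged in N lie in U and contribute less than epsilon in
     total; every other cell contributes at most epsilon times its length. *)
  obtain U where U: "open U" "N \<subseteq> U" and small: "\<And>p. p tagged_partial_division_of {a..b} \<Longrightarrow>
      \<Union>(snd ` p) \<subseteq> U \<Longrightarrow> (\<Sum>(t,K)\<in>p. f (Sup K) - f (Inf K)) < \<epsilon>"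
    using abs_cont_on_increments_near_negligible[OF assms(2-4)] by blast
  obtain \<gamma> where \<gamma>: "gauge \<gamma>" "\<And>t. t \<in> N \<Longrightarrow> \<gamma> t \<subseteq> U"
    "\<And>t u v. t \<in> {a..b} - N \<Longrightarrow> u \<in> {a..b} \<Longrightarrow> v \<in> {a..b} \<Longrightarrow> t \<in> {u..v} \<Longrightarrow>
      {u..v} \<subseteq> \<gamma> t \<Longrightarrow> f v - f u \<le> \<epsilon> * (v - u)"
    using gauge_nonpos_derivative[OF U assms(4) der] by blast
  obtain p where p: "p tagged_division_of {a..b}" "\<gamma> fine p"
    using fine_division_exists_real[OF \<gamma>(1)] by blast
  then have p_partial: "p tagged_partial_division_of {a..b}"
    unfolding tagged_division_of_def by blast
  define p1 where "p1 = {(t, K) \<in> p. t \<in> N}"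
  have "finite p" "p1 \<subseteq> p"
    using p(1) by (auto simp: p1_def)
  then have "p1 tagged_partial_division_of {a..b}"
    using p_partial by (blast intro: tagged_partial_division_subset)
  then have bad: "(\<Sum>(t,K)\<in>p1. f (Sup K) - f (Inf K)) < \<epsilon>"
    by (rule small) (use fineD[OF p(2)] \<gamma>(2) in \<open>force simp: p1_def\<close>)
  have good: "(\<Sum>(t,K)\<in>p - p1. f (Sup K) - f (Inf K)) \<le> \<epsilon> * (b - a)"
  proof (rule tagged_division_sum_increments_le[OF p(1) \<open>a \<le> b\<close> _ Diff_subset])
    show "0 \<le> \<epsilon>" using assms(4) by simp
    fix t K assume "(t, K) \<in> p - p1"
    then have tK: "(t, K) \<in> p" "t \<notin> N" by (auto simp: p1_def)
    then obtain u v where "K = {u..v}" "u \<le> t" "t \<le> v" "{u..v} \<subseteq> {a..b}"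
      by (elim tagged_partial_division_real_cellE[OF p_partial])
    moreover have "K \<subseteq> \<gamma> t" using fineD[OF p(2) tK(1)] .
    ultimately show "f (Sup K) - f (Inf K) \<le> \<epsilon> * (Sup K - Inf K)"
      using \<gamma>(3)[of t u v] tK(2) by auto
  qed
  have "f b - f a = (\<Sum>(t,K)\<in>p. f (Sup K) - f (Inf K))"
    using additive_tagged_division_1[OF assms(1) p(1), of f] by simp
  also have "\<dots> = (\<Sum>(t,K)\<in>p - p1. f (Sup K) - f (Inf K)) + (\<Sum>(t,K)\<in>p1. f (Sup K) - f (Inf K))"
    using sum.subset_diff[OF \<open>p1 \<subseteq> p\<close> \<open>finite p\<close>] .
  finally show ?thesis
    using good bad by (simp add: algebra_simps)
qed

lemma abs_cont_on_nonpos_derivative_imp_le: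
  fixes f :: "real \<Rightarrow> real"
  assumes "a \<le> b" "abs_cont_on {a..b} f" "negligible N"
    and "\<And>t. t \<in> {a..b} - N \<Longrightarrow> \<exists>D. (f has_real_derivative D) (at t within {a..b}) \<and> D \<le> 0"
  shows "f b \<le> f a"
proof (rule field_le_epsilon)
  fix e :: real assume "e > 0"
  with assms(1) have "e / (b - a + 1) > 0" by simp
  then have "f b - f a \<le> e / (b - a + 1) * (b - a + 1)"
    using abs_cont_on_nonpos_derivative_increment_le[OF assms(1-3) _ assms(4)] by blast
  with assms(1) show "f b \<le> f a + e" by simp
qed

lemma AE_nonpos_derivative_imp_antimono:
  fixes h :: "real \<Rightarrow> real"
  assumes der: "AE t in lborel. a \<le> t \<longrightarrow> (\<exists>D. (h has_real_derivative D) (at t) \<and> D \<le> 0)"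
    and ac: "\<And>s t. a \<le> s \<Longrightarrow> s \<le> t \<Longrightarrow> abs_cont_on {s..t} h"
    and "a \<le> s" "s \<le> t"
  shows "h t \<le> h s"
proof -
  obtain N where N: "{t \<in> space lborel. \<not> (a \<le> t \<longrightarrow> (\<exists>D. (h has_real_derivative D) (at t) \<and> D \<le> 0))} \<subseteq> N"
    "emeasure lborel N = 0" "N \<in> sets lborel"
    using der by (rule AE_E)
  then have "negligible N"
    by (simp add: negligible_iff_null_sets null_sets_completionI null_setsI)
  moreover have "\<exists>D. (h has_real_derivative D) (at r within {s..t}) \<and> D \<le> 0" if "r \<in> {s..t} - N" for r
  proof -
    have "a \<le> r" "r \<notin> N" using that \<open>a \<le> s\<close> by auto
    then obtain D where "(h has_real_derivative D) (at r)" "D \<le> 0"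
      using N(1) by auto
    then show ?thesis using has_field_derivative_at_within by blast
  qed
  ultimately show ?thesis
    using abs_cont_on_nonpos_derivative_imp_le[OF \<open>s \<le> t\<close> ac[OF assms(3,4)]] by blast
qed

lemma antimono_limits_at_top:
  fixes h :: "real \<Rightarrow> real"
  assumes antimono: "\<And>s t. a \<le> s \<Longrightarrow> s \<le> t \<Longrightarrow> h t \<le> h s"
  shows "\<exists>L. L \<noteq> \<infinity> \<and> ((\<lambda>t. ereal (h t)) \<longlongrightarrow> L) at_top"
    and "bdd_below (h ` {a..}) \<Longrightarrow> \<exists>L. (h \<longlongrightarrow> L) at_top"
proof -
  let ?L = "INF t\<in>{a..}. ereal (h t)"
  have lim: "((\<lambda>t. ereal (h t)) \<longlongrightarrow> ?L) at_top"
  proof (rule decreasing_tendsto)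
    show "\<forall>\<^sub>F t in at_top. ?L \<le> ereal (h t)"
      using eventually_ge_at_top[of a] by eventually_elim (auto intro: INF_lower)
  next
    fix y assume "?L < y"
    then obtain s where s: "a \<le> s" "ereal (h s) < y"
      unfolding INF_less_iff by auto
    show "\<forall>\<^sub>F t in at_top. ereal (h t) < y"
      using eventually_ge_at_top[of s]
    proof eventually_elim
      case (elim t)
      with antimono s(1) have "ereal (h t) \<le> ereal (h s)" by simp
      then show ?case using s(2) by (rule order_le_less_trans)
    qed
  qed
  have "?L \<noteq> \<infinity>"
    using INF_lower[of a "{a..}" "\<lambda>t. ereal (h t)"] by auto
  with lim show "\<exists>L. L \<noteq> \<infinity> \<and> ((\<lambda>t. ereal (h t)) \<longlongrightarrow> L) at_top"
    by blast
  assume "bdd_below (h ` {a..})"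
  then obtain c where "\<And>t. a \<le> t \<Longrightarrow> c \<le> h t"
    unfolding bdd_below_def by auto
  then have "ereal c \<le> ?L"
    by (intro INF_greatest) auto
  with \<open>?L \<noteq> \<infinity>\<close> obtain L where "?L = ereal L"
    by (cases ?L) auto
  with lim show "\<exists>L. (h \<longlongrightarrow> L) at_top"
    by auto
qed

lemma proj_inner_le:
  fixes K :: "'a::real_inner set"
  assumes "compact K" "convex K" "z \<in> K"
  shows "(y - proj K y) \<bullet> (z - proj K y) \<le> 0"
proof -
  have "continuous_on K (\<lambda>w. norm (w - y))"
    by (intro continuous_on_norm continuous_on_diff continuous_on_id continuous_on_const)
  moreover have "K \<noteq> {}" using assms(3) by blast
  ultimately obtain w where "w \<in> K" "\<forall>z\<in>K. norm (w - y) \<le> norm (z - y)"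
    using continuous_attains_inf[OF assms(1)] by blast
  then have "\<exists>w. w \<in> K \<and> (\<forall>z\<in>K. (norm (w - y))\<^sup>2 \<le> (norm (z - y))\<^sup>2)"
    by (meson norm_ge_zero power_mono)
  then have "proj K y \<in> K \<and> (\<forall>z\<in>K. (norm (proj K y - y))\<^sup>2 \<le> (norm (z - y))\<^sup>2)"
    unfolding proj_def by (rule someI_ex)
  then have "proj K y \<in> K" "\<forall>z\<in>K. dist y (proj K y) \<le> dist y z"
    by (metis dist_commute dist_norm norm_ge_zero power2_le_imp_le)+
  then show ?thesis
    using any_closest_point_dot[OF assms(2) compact_imp_closed[OF assms(1)] _ assms(3)] by blast
qed

lemma
  fixes g :: "nat \<Rightarrow> 'a::real_inner \<Rightarrow> 'a"
  shows compact_Cset: "compact (Cset m g z)"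
    and convex_Cset: "convex (Cset m g z)"
    and gradient_in_Cset: "i \<in> {1..m} \<Longrightarrow> g i z \<in> Cset m g z"
  unfolding Cset_def
  by (auto intro: finite_imp_compact_convex_hull hull_inc)

lemma proj_translate_inner_le:
  fixes K :: "'a::real_inner set"
  assumes K: "compact K" "convex K" "G \<in> K"
    and "c > 0" and eq: "c *\<^sub>R v + proj ((\<lambda>k. k + w) ` K) 0 = 0"
  shows "G \<bullet> v + v \<bullet> w \<le> - c * (norm v)\<^sup>2"
proof -
  let ?K = "(\<lambda>k. k + w) ` K"
  have "?K = (+) w ` K" by (auto simp: add.commute)
  then have "compact ?K" "convex ?K"
    using K by (simp_all add: compact_translation convex_translation)
  moreover have "G + w \<in> ?K" using K(3) by blast
  moreover have "proj ?K 0 = - c *\<^sub>R v"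
    using eq by (simp add: eq_neg_iff_add_eq_0 add.commute)
  ultimately have "(c *\<^sub>R v) \<bullet> (G + w + c *\<^sub>R v) \<le> 0"
    using proj_inner_le[of ?K "G + w" 0] by simp
  then have "c * (G \<bullet> v + v \<bullet> w + c * (norm v)\<^sup>2) \<le> 0"
    by (simp add: algebra_simps inner_commute power2_norm_eq_inner)
  then have "G \<bullet> v + v \<bullet> w + c * (norm v)\<^sup>2 \<le> 0"
    using \<open>c > 0\<close> by (simp add: mult_le_0_iff)
  then show ?thesis by simp
qed

lemma half_norm_squared_diff_le:
  fixes a b :: "'a::real_normed_vector"
  assumes "norm a \<le> M" "norm b \<le> M"
  shows "\<bar>(1/2) * (norm a)\<^sup>2 - (1/2) * (norm b)\<^sup>2\<bar> \<le> M * norm (a - b)"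
proof -
  have eq: "(1/2) * (norm a)\<^sup>2 - (1/2) * (norm b)\<^sup>2 = (norm a - norm b) * (norm a + norm b) / 2"
    by (simp add: power2_eq_square algebra_simps)
  have "\<bar>(1/2) * (norm a)\<^sup>2 - (1/2) * (norm b)\<^sup>2\<bar> = \<bar>norm a - norm b\<bar> * (norm a + norm b) / 2"
    unfolding eq by (simp add: abs_mult)
  also have "\<dots> \<le> norm (a - b) * (2 * M) / 2"
    using assms by (intro divide_right_mono mult_mono norm_triangle_ineq3) auto
  finally show ?thesis by (simp add: mult.commute)
qed

lemma abs_cont_on_compose_gradient:
  fixes \<phi> :: "'a::real_inner \<Rightarrow> real" and G :: "'a \<Rightarrow> 'a" and x xd :: "real \<Rightarrow> 'a"
  assumes \<phi>: "\<And>z. (\<phi> has_derivative (\<lambda>h. G z \<bullet> h)) (at z)" and G: "continuous_on UNIV G"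
    and x: "\<And>t. t \<in> {a..b} \<Longrightarrow> (x has_vector_derivative xd t) (at t within {a..b})"
    and xd: "continuous_on {a..b} xd"
  shows "abs_cont_on {a..b} (\<lambda>t. \<phi> (x t))"
proof -
  have "continuous_on {a..b} (\<lambda>t. G (x t) \<bullet> xd t)"
    using continuous_on_vector_derivative[OF x] G xd
    by (intro continuous_intros) (auto intro: continuous_on_compose2[OF G])
  then have "bounded ((\<lambda>t. G (x t) \<bullet> xd t) ` {a..b})"
    by (intro compact_imp_bounded compact_continuous_image compact_Icc)
  then obtain B where B: "\<forall>t\<in>{a..b}. \<bar>G (x t) \<bullet> xd t\<bar> \<le> B"
    unfolding bounded_iff by auto
  have "norm (\<phi> (x v) - \<phi> (x u)) \<le> B * norm (v - u)" if "u \<in> {a..b}" "v \<in> {a..b}" for u v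
  proof (rule differentiable_bound[OF convex_real_interval(5) _ _ that(2,1)])
    fix t assume t: "t \<in> {a..b}"
    show "((\<lambda>t. \<phi> (x t)) has_derivative (\<lambda>h. G (x t) \<bullet> (h *\<^sub>R xd t))) (at t within {a..b})"
      using diff_chain_within[OF x[OF t, unfolded has_vector_derivative_def] has_derivative_at_withinI[OF \<phi>]]
      by (simp add: o_def)
    show "onorm (\<lambda>h. G (x t) \<bullet> (h *\<^sub>R xd t)) \<le> B"
    proof (rule onorm_le)
      fix h :: real
      have "\<bar>G (x t) \<bullet> xd t\<bar> \<le> B" using B t by blast
      then show "norm (G (x t) \<bullet> (h *\<^sub>R xd t)) \<le> B * norm h"
        by (simp add: abs_mult) (metis abs_ge_zero mult.commute mult_left_mono)
    qed
  qed
  then show ?thesis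
    by (intro abs_cont_on_compose_lipschitz[OF abs_cont_on_id])
qed

lemma abs_cont_on_half_norm_squared:
  fixes v :: "real \<Rightarrow> 'a::real_normed_vector"
  assumes "continuous_on {a..b} v" "abs_cont_on {a..b} v"
  shows "abs_cont_on {a..b} (\<lambda>t. (1/2) * (norm (v t))\<^sup>2)"
proof -
  have "bounded (v ` {a..b})"
    using assms(1) by (intro compact_imp_bounded compact_continuous_image compact_Icc)
  then obtain M where M: "\<forall>t\<in>{a..b}. norm (v t) \<le> M"
    unfolding bounded_iff by auto
  show ?thesis
  proof (rule abs_cont_on_compose_lipschitz[OF assms(2)])
    fix s t assume "s \<in> {a..b}" "t \<in> {a..b}"
    then show "norm ((1/2) * (norm (v t))\<^sup>2 - (1/2) * (norm (v s))\<^sup>2) \<le> M * norm (v t - v s)"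
      using M half_norm_squared_diff_le[of "v t" M "v s"] by simp
  qed
qed

lemma abs_cont_on_energy:
  fixes \<phi> :: "'a::real_inner \<Rightarrow> real" and G :: "'a \<Rightarrow> 'a" and x xd :: "real \<Rightarrow> 'a"
  assumes "\<And>z. (\<phi> has_derivative (\<lambda>h. G z \<bullet> h)) (at z)" "continuous_on UNIV G"
    and "{a..b} \<subseteq> S"
    and x: "\<And>t. t \<in> S \<Longrightarrow> (x has_vector_derivative xd t) (at t within S)"
    and "continuous_on S xd" "abs_cont_on {a..b} xd"
  shows "abs_cont_on {a..b} (\<lambda>t. \<phi> (x t) + (1/2) * (norm (xd t))\<^sup>2)"
proof -
  have "continuous_on {a..b} xd"
    using assms(5,3) by (rule continuous_on_subset)
  moreover have "(x has_vector_derivative xd t) (at t within {a..b})" if "t \<in> {a..b}" for t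
  proof -
    have "t \<in> S" using that assms(3) by blast
    then show ?thesis
      using assms(3) by (rule has_vector_derivative_within_subset[OF x])
  qed
  ultimately show ?thesis
    using assms(1,2,6)
    by (intro abs_cont_on_add abs_cont_on_compose_gradient abs_cont_on_half_norm_squared)
qed

lemma energy_antimono:
  fixes \<phi> :: "'a::real_inner \<Rightarrow> real" and G :: "'a \<Rightarrow> 'a" and x xd :: "real \<Rightarrow> 'a"
  defines "W \<equiv> \<lambda>t. \<phi> (x t) + (1/2) * (norm (xd t))\<^sup>2"
  assumes \<phi>: "\<And>z. (\<phi> has_derivative (\<lambda>h. G z \<bullet> h)) (at z)" and G: "continuous_on UNIV G"
    and x: "\<And>t. t \<ge> t0 \<Longrightarrow> (x has_vector_derivative xd t) (at t within {t0..})"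
    and xd: "continuous_on {t0..} xd" "\<And>T. T \<ge> t0 \<Longrightarrow> abs_cont_on {t0..T} xd"
    and "\<alpha> > 0" "t0 > 0"
    and dissipation: "AE t in lborel. t0 \<le> t \<longrightarrow>
      (\<exists>D. (W has_real_derivative D) (at t) \<and> D \<le> - (\<alpha> / t) * (norm (xd t))\<^sup>2)"
    and st: "t0 \<le> s" "s \<le> t"
  shows "W t \<le> W s"
proof (rule AE_nonpos_derivative_imp_antimono[OF _ _ st])
  show "AE t in lborel. t0 \<le> t \<longrightarrow> (\<exists>D. (W has_real_derivative D) (at t) \<and> D \<le> 0)"
    using dissipation
  proof eventually_elim
    case (elim t)
    show ?case
    proof
      assume "t0 \<le> t"
      with elim obtain D where "(W has_real_derivative D) (at t)" "D \<le> - (\<alpha> / t) * (norm (xd t))\<^sup>2"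
        by blast
      moreover have "0 \<le> (\<alpha> / t) * (norm (xd t))\<^sup>2"
        using \<open>\<alpha> > 0\<close> \<open>t0 > 0\<close> \<open>t0 \<le> t\<close> by simp
      ultimately show "\<exists>D. (W has_real_derivative D) (at t) \<and> D \<le> 0"
        by (intro exI[of _ D]) simp
    qed
  qed
  show "abs_cont_on {u..v} W" if uv: "t0 \<le> u" "u \<le> v" for u v
  proof -
    have "abs_cont_on {t0..v} xd"
      using uv by (intro xd(2)) simp
    then have "abs_cont_on {u..v} xd"
      by (rule abs_cont_on_subset) (use uv in auto)
    moreover have "{u..v} \<subseteq> {t0..}" using uv by auto
    moreover have "(x has_vector_derivative xd r) (at r within {t0..})" if "r \<in> {t0..}" for r
      using x that by simp
    ultimately show ?thesis
      unfolding W_def using abs_cont_on_energy[OF \<phi> G _ _ xd(1)] by blast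
  qed
qed

lemma has_real_derivative_energy:
  fixes \<phi> :: "'a::real_inner \<Rightarrow> real" and x xd :: "real \<Rightarrow> 'a"
  assumes "(\<phi> has_derivative (\<lambda>h. G \<bullet> h)) (at (x t))"
    and "(x has_vector_derivative v) (at t)" "(xd has_vector_derivative w) (at t)"
  shows "((\<lambda>s. \<phi> (x s) + (1/2) * (norm (xd s))\<^sup>2) has_real_derivative G \<bullet> v + xd t \<bullet> w) (at t)"
proof -
  have "((\<lambda>s. \<phi> (x s)) has_derivative (\<lambda>h. G \<bullet> (h *\<^sub>R v))) (at t)"
    using diff_chain_at[OF assms(2)[unfolded has_vector_derivative_def] assms(1)] by (simp add: o_def)
  moreover have "((\<lambda>s. (1/2) * (xd s \<bullet> xd s)) has_derivative
      (\<lambda>h. (xd t \<bullet> (h *\<^sub>R w) + (h *\<^sub>R w) \<bullet> xd t) / 2)) (at t)"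
    using assms(3) unfolding has_vector_derivative_def by (auto intro!: derivative_eq_intros)
  ultimately have "((\<lambda>s. \<phi> (x s) + (1/2) * (xd s \<bullet> xd s)) has_derivative
      (\<lambda>h. G \<bullet> (h *\<^sub>R v) + (xd t \<bullet> (h *\<^sub>R w) + (h *\<^sub>R w) \<bullet> xd t) / 2)) (at t)"
    by (rule has_derivative_add)
  then show ?thesis
    unfolding has_field_derivative_def power2_norm_eq_inner
    by (rule has_derivative_eq_rhs) (auto simp: algebra_simps inner_commute)
qed

lemma energy_derivative_le:
  fixes f :: "nat \<Rightarrow> 'a::real_inner \<Rightarrow> real" and g :: "nat \<Rightarrow> 'a \<Rightarrow> 'a" and x xd xdd :: "real \<Rightarrow> 'a"
  assumes "i \<in> {1..m}" "(f i has_derivative (\<lambda>h. g i (x t) \<bullet> h)) (at (x t))"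
    and "(x has_vector_derivative xd t) (at t)" "(xd has_vector_derivative xdd t) (at t)"
    and "c > 0" "c *\<^sub>R xd t + proj ((\<lambda>k. k + xdd t) ` Cset m g (x t)) 0 = 0"
  shows "\<exists>D. ((\<lambda>s. f i (x s) + (1/2) * (norm (xd s))\<^sup>2) has_real_derivative D) (at t)
    \<and> D \<le> - c * (norm (xd t))\<^sup>2"
proof (intro exI conjI)
  show "((\<lambda>s. f i (x s) + (1/2) * (norm (xd s))\<^sup>2) has_real_derivative
      g i (x t) \<bullet> xd t + xd t \<bullet> xdd t) (at t)"
    by (rule has_real_derivative_energy[OF assms(2-4)])
  show "g i (x t) \<bullet> xd t + xd t \<bullet> xdd t \<le> - c * (norm (xd t))\<^sup>2"
    by (rule proj_translate_inner_le[OF compact_Cset convex_Cset gradient_in_Cset[OF assms(1)] assms(5,6)])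
qed

lemma AE_energy_derivative_le:
  fixes f :: "nat \<Rightarrow> 'a::real_inner \<Rightarrow> real" and g :: "nat \<Rightarrow> 'a \<Rightarrow> 'a" and x xd xdd :: "real \<Rightarrow> 'a"
  assumes "i \<in> {1..m}" "\<And>z. (f i has_derivative (\<lambda>h. g i z \<bullet> h)) (at z)" "\<alpha> > 0" "t0 > 0"
    and x: "\<And>t. t \<ge> t0 \<Longrightarrow> (x has_vector_derivative xd t) (at t within {t0..})"
    and "AE t in lborel. t > t0 \<longrightarrow> (xd has_vector_derivative xdd t) (at t)"
    and "AE t in lborel. t > t0 \<longrightarrow> (\<alpha> / t) *\<^sub>R xd t + proj ((\<lambda>c. c + xdd t) ` Cset m g (x t)) 0 = 0"
  shows "AE t in lborel. t0 \<le> t \<longrightarrow> (\<exists>D. ((\<lambda>t. f i (x t) + (1/2) * (norm (xd t))\<^sup>2)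
    has_real_derivative D) (at t) \<and> D \<le> - (\<alpha> / t) * (norm (xd t))\<^sup>2)"
  using assms(6,7) AE_lborel_singleton[of t0]
proof eventually_elim
  case (elim t)
  show ?case
  proof
    assume "t0 \<le> t"
    with elim(3) have t: "t > t0" by simp
    then have "at t within {t0..} = at t"
      by (intro at_within_interior) (simp add: interior_Ici[of "t0 - 1"])
    then have "(x has_vector_derivative xd t) (at t)"
      using x[of t] t by simp
    moreover have "\<alpha> / t > 0" using assms(3,4) t by simp
    ultimately show "\<exists>D. ((\<lambda>t. f i (x t) + (1/2) * (norm (xd t))\<^sup>2) has_real_derivative D) (at t)
        \<and> D \<le> - (\<alpha> / t) * (norm (xd t))\<^sup>2"
      using elim(1,2) t
      by (intro energy_derivative_le[where f = f and g = g and x = x and xd = xd and t = t,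
            OF assms(1,2)]) auto
  qed
qed

theorem proposition4p1:
  fixes m :: nat
    and f :: "nat \<Rightarrow> 'a::{real_inner, complete_space} \<Rightarrow> real"
    and g :: "nat \<Rightarrow> 'a \<Rightarrow> 'a"
    and \<alpha> t0 :: real
    and x0 v0 :: 'a
    and x xd xdd :: "real \<Rightarrow> 'a"
  assumes m_pos: "m \<ge> 1"
    and f_convex: "\<And>i. i \<in> {1..m} \<Longrightarrow> convex_on UNIV (f i)"
    and f_grad: "\<And>i z. i \<in> {1..m} \<Longrightarrow> (f i has_derivative (\<lambda>h. g i z \<bullet> h)) (at z)"
    and g_cont: "\<And>i. i \<in> {1..m} \<Longrightarrow> continuous_on UNIV (g i)"
    and \<alpha>_pos: "\<alpha> > 0"
    and t0_pos: "t0 > 0"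
    \<comment> \<open>x is C^1 on [t0,+inf) with derivative xd\<close>
    and x_deriv: "\<And>t. t \<ge> t0 \<Longrightarrow> (x has_vector_derivative xd t) (at t within {t0..})"
    and xd_cont: "continuous_on {t0..} xd"
    \<comment> \<open>xd absolutely continuous on every [t0,T]\<close>
    and xd_ac: "\<And>T. T \<ge> t0 \<Longrightarrow> abs_cont_on {t0..T} xd"
    \<comment> \<open>xdd measurable, xd(t) = xd(t0) + integral of xdd over [t0,t]\<close>
    and xdd_meas: "xdd \<in> borel_measurable (lebesgue_on {t0..})"
    and xd_integral: "\<And>t. t \<ge> t0 \<Longrightarrow> (xdd has_integral (xd t - xd t0)) {t0..t}"
    and xdd_deriv: "AE t in lborel. t > t0 \<longrightarrow> (xd has_vector_derivative xdd t) (at t)"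
    \<comment> \<open>the differential inclusion, a.e.\<close>
    and ode: "AE t in lborel. t > t0 \<longrightarrow>
               (\<alpha> / t) *\<^sub>R xd t + proj ((\<lambda>c. c + xdd t) ` Cset m g (x t)) 0 = 0"
    and init: "x t0 = x0" "xd t0 = v0"
  shows "\<forall>i\<in>{1..m}.
           let W = (\<lambda>t. f i (x t) + (1/2) * (norm (xd t))\<^sup>2) in
             (AE t in lborel. t \<ge> t0 \<longrightarrow>
                (\<exists>D. (W has_real_derivative D) (at t) \<and> D \<le> - (\<alpha> / t) * (norm (xd t))\<^sup>2))
           \<and> (\<forall>s t. t0 \<le> s \<longrightarrow> s \<le> t \<longrightarrow> W t \<le> W s)
           \<and> (\<exists>L::ereal. L \<noteq> \<infinity> \<and> ((\<lambda>t. ereal (W t)) \<longlongrightarrow> L) at_top)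
           \<and> (bdd_below (range (f i)) \<longrightarrow> (\<exists>L::real. (W \<longlongrightarrow> L) at_top))"
proof (intro ballI)
  fix i assume i: "i \<in> {1..m}"
  define W where "W t = f i (x t) + (1/2) * (norm (xd t))\<^sup>2" for t
  have dissipation: "AE t in lborel. t0 \<le> t \<longrightarrow>
      (\<exists>D. (W has_real_derivative D) (at t) \<and> D \<le> - (\<alpha> / t) * (norm (xd t))\<^sup>2)"
    unfolding W_def[abs_def]
    using i f_grad[OF i] \<alpha>_pos t0_pos x_deriv xdd_deriv ode by (rule AE_energy_derivative_le)
  have antimono: "W t \<le> W s" if "t0 \<le> s" "s \<le> t" for s t
    using energy_antimono[OF f_grad[OF i] g_cont[OF i] x_deriv xd_cont xd_ac \<alpha>_pos t0_pos
        dissipation[unfolded W_def[abs_def]] that]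
    by (simp add: W_def)
  have "bdd_below (W ` {t0..})" if "bdd_below (range (f i))"
  proof -
    from that obtain c where "\<And>z. c \<le> f i z"
      unfolding bdd_below_def by auto
    then have "c \<le> W t" for t
      unfolding W_def by (simp add: add_increasing2)
    then show ?thesis by (rule bdd_belowI2)
  qed
  then show "let W = (\<lambda>t. f i (x t) + (1/2) * (norm (xd t))\<^sup>2) in
      (AE t in lborel. t \<ge> t0 \<longrightarrow>
        (\<exists>D. (W has_real_derivative D) (at t) \<and> D \<le> - (\<alpha> / t) * (norm (xd t))\<^sup>2))
      \<and> (\<forall>s t. t0 \<le> s \<longrightarrow> s \<le> t \<longrightarrow> W t \<le> W s)
      \<and> (\<exists>L::ereal. L \<noteq> \<infinity> \<and> ((\<lambda>t. ereal (W t)) \<longlongrightarrow> L) at_top)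
      \<and> (bdd_below (range (f i)) \<longrightarrow> (\<exists>L::real. (W \<longlongrightarrow> L) at_top))"
    unfolding Let_def W_def[symmetric]
    using dissipation antimono antimono_limits_at_top[of t0 W] by simp
qed

end
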